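(* Let $G$ and $H$ be finite simple graphs. Two vertices $(g,h)$ and $(g',h')$ of $G\diamond H$ satisfy $N_{G\diamond H}[(g,h)]=N_{G\diamond H}[(g',h')]$ if and only if (i) $N_G[g]=N_G[g']$ and $N_H[h]=N_H[h']$, or (ii) $\{g,g'\}$ is a $\gamma_G$-pair and $\{h,h'\}$ is a $\gamma_H$-pair.
   Context: The modular product $G\diamond H$ has vertex set $V(G)\times V(H)$; distinct vertices $(g,h)$ and $(g',h')$ are adjacent iff ($g=g'$ and $hh'\in E(H)$), or ($gg'\in E(G)$ and $h=h'$), or ($gg'\in E(G)$ and $hh'\in E(H)$), or ($g\neq g'$, $h\neq h'$, $gg'\notin E(G)$ and $hh'\notin E(H)$). $N_X[v]$ denotes the closed neighborhood of $v$ in a graph $X$. A $\gamma_G$-pair is a set $\{g,g'\}$ of two distinct vertices of $G$ such that $N_G[g]\cap N_G[g']=\emptyset$ and $N_G[g]\cup N_G[g']=V(G)$ (i.e. the two closed neighborhoods partition $V(G)$). *)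

theory Defs
  imports Main
begin

definition simple_graph :: "'a set \<Rightarrow> ('a \<Rightarrow> 'a \<Rightarrow> bool) \<Rightarrow> bool" where
  "simple_graph V E \<longleftrightarrow> finite V \<and>
     (\<forall>x y. E x y \<longrightarrow> x \<in> V \<and> y \<in> V) \<and>
     (\<forall>x y. E x y \<longrightarrow> E y x) \<and>
     (\<forall>x. \<not> E x x)"

definition closed_nbhd :: "'a set \<Rightarrow> ('a \<Rightarrow> 'a \<Rightarrow> bool) \<Rightarrow> 'a \<Rightarrow> 'a set" where
  "closed_nbhd V E v = {u \<in> V. u = v \<or> E v u}"

definition modular_adj ::
  "'a set \<Rightarrow> ('a \<Rightarrow> 'a \<Rightarrow> bool) \<Rightarrow> 'b set \<Rightarrow> ('b \<Rightarrow> 'b \<Rightarrow> bool)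
     \<Rightarrow> ('a \<times> 'b) \<Rightarrow> ('a \<times> 'b) \<Rightarrow> bool" where
  "modular_adj VG EG VH EH p q \<longleftrightarrow>
     (case p of (g, h) \<Rightarrow> case q of (g', h') \<Rightarrow>
       g \<in> VG \<and> g' \<in> VG \<and> h \<in> VH \<and> h' \<in> VH \<and> (g, h) \<noteq> (g', h') \<and>
       ((g = g' \<and> EH h h') \<or> (EG g g' \<and> h = h') \<or> (EG g g' \<and> EH h h') \<or>
        (g \<noteq> g' \<and> h \<noteq> h' \<and> \<not> EG g g' \<and> \<not> EH h h')))"

definition gamma_pair :: "'a set \<Rightarrow> ('a \<Rightarrow> 'a \<Rightarrow> bool) \<Rightarrow> 'a \<Rightarrow> 'a \<Rightarrow> bool" where
  "gamma_pair V E g g' \<longleftrightarrow> g \<in> V \<and> g' \<in> V \<and> g \<noteq> g' \<and>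
     closed_nbhd V E g \<inter> closed_nbhd V E g' = {} \<and>
     closed_nbhd V E g \<union> closed_nbhd V E g' = V"

end

theory Submission
  imports Defs
begin

text \<open>In the modular product, (x,y) is a closed neighbour of (g,h) exactly when
x \<in> N[g] and y \<in> N[h] hold or fail together. Two such agreement sets coincide
iff the pointwise disagreements of N[g], N[g'] on V(G) and of N[h], N[h'] on V(H)
are one and the same constant: either nowhere (equal neighbourhoods) or everywhere
(complementary neighbourhoods, i.e. gamma-pairs).\<close>

lemma closed_nbhd_modular_adj:
  assumes "\<And>x. \<not> EG x x" and "\<And>y. \<not> EH y y" and "g \<in> VG" and "h \<in> VH"
  shows "closed_nbhd (VG \<times> VH) (modular_adj VG EG VH EH) (g, h)
     = {(x, y) \<in> VG \<times> VH. x \<in> closed_nbhd VG EG g \<longleftrightarrow> y \<in> closed_nbhd VH EH h}"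
  using assms unfolding closed_nbhd_def modular_adj_def by auto

lemma agreement_sets_eq_iff:
  assumes "A \<subseteq> X" "A' \<subseteq> X" "B \<subseteq> Y" "B' \<subseteq> Y" and "X \<noteq> {}" "Y \<noteq> {}"
  shows "{(x, y) \<in> X \<times> Y. x \<in> A \<longleftrightarrow> y \<in> B} = {(x, y) \<in> X \<times> Y. x \<in> A' \<longleftrightarrow> y \<in> B'}
     \<longleftrightarrow> (A = A' \<and> B = B') \<or> (A \<inter> A' = {} \<and> A \<union> A' = X \<and> B \<inter> B' = {} \<and> B \<union> B' = Y)"
    (is "?L = ?L' \<longleftrightarrow> _")
proof
  assume "?L = ?L'"
  then have agree: "(x \<in> A \<longleftrightarrow> x \<in> A') \<longleftrightarrow> (y \<in> B \<longleftrightarrow> y \<in> B')" if "x \<in> X" "y \<in> Y" for x y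
    using that by (auto simp: set_eq_iff)
  obtain x0 where x0: "x0 \<in> X" using \<open>X \<noteq> {}\<close> by blast
  obtain y0 where y0: "y0 \<in> Y" using \<open>Y \<noteq> {}\<close> by blast
  show "(A = A' \<and> B = B') \<or> (A \<inter> A' = {} \<and> A \<union> A' = X \<and> B \<inter> B' = {} \<and> B \<union> B' = Y)"
  proof (cases "y0 \<in> B \<longleftrightarrow> y0 \<in> B'")
    case True
    then have "A = A'" using agree[OF _ y0] assms(1,2) by blast
    moreover have "B = B'" using agree[OF x0] \<open>A = A'\<close> assms(3,4) by blast
    ultimately show ?thesis by blast
  next
    case False
    then have "A \<inter> A' = {} \<and> A \<union> A' = X" using agree[OF _ y0] assms(1,2) by blast
    moreover have "B \<inter> B' = {} \<and> B \<union> B' = Y" using agree[OF x0] calculation x0 assms(3,4) by blast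
    ultimately show ?thesis by blast
  qed
qed auto

text \<open>The condition g \<noteq> g' of a gamma-pair is redundant: g and g' lie in their own,
disjoint, closed neighbourhoods.\<close>

lemma gamma_pair_iff_complementary_nbhds:
  "gamma_pair V E g g' \<longleftrightarrow> g \<in> V \<and> g' \<in> V \<and>
     closed_nbhd V E g \<inter> closed_nbhd V E g' = {} \<and> closed_nbhd V E g \<union> closed_nbhd V E g' = V"
  unfolding gamma_pair_def closed_nbhd_def by blast

theorem mainTheorem2:
  fixes VG :: "'a set" and EG :: "'a \<Rightarrow> 'a \<Rightarrow> bool"
    and VH :: "'b set" and EH :: "'b \<Rightarrow> 'b \<Rightarrow> bool"
  assumes "simple_graph VG EG" and "simple_graph VH EH"
    and "g \<in> VG" and "g' \<in> VG" and "h \<in> VH" and "h' \<in> VH"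
  shows "closed_nbhd (VG \<times> VH) (modular_adj VG EG VH EH) (g, h)
           = closed_nbhd (VG \<times> VH) (modular_adj VG EG VH EH) (g', h')
         \<longleftrightarrow> (closed_nbhd VG EG g = closed_nbhd VG EG g' \<and>
              closed_nbhd VH EH h = closed_nbhd VH EH h')
           \<or> (gamma_pair VG EG g g' \<and> gamma_pair VH EH h h')"
proof -
  have irrefl: "\<And>x. \<not> EG x x" "\<And>y. \<not> EH y y"
    using assms(1,2) unfolding simple_graph_def by blast+
  have nbhds_in: "closed_nbhd VG EG v \<subseteq> VG" "closed_nbhd VH EH w \<subseteq> VH" for v w
    unfolding closed_nbhd_def by auto
  have nonempty: "VG \<noteq> {}" "VH \<noteq> {}"
    using assms(3,5) by blast+
  show ?thesis
    unfolding closed_nbhd_modular_adj[OF irrefl assms(3,5)]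
      closed_nbhd_modular_adj[OF irrefl assms(4,6)]
      agreement_sets_eq_iff[OF nbhds_in(1,1,2,2) nonempty]
      gamma_pair_iff_complementary_nbhds
    using assms(3-6) by simp
qed

end
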